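(* For every $\vec\lambda=(\lambda_1,\lambda_2,\lambda_3)\in\mathbb R^3$ there exist smooth symmetric $(0,2)$-tensors $\sigma,\tau$ on $\mathbb R^3$ with compact support in $A_1=\{1<|x|<2\}$, satisfying $\sigma(x)=\sigma(-x)$ and $\tau(x)=\tau(-x)$, such that \[L\sigma=0,\qquad \sum_i\tau_{ij,i}=0\ \ (j=1,2,3),\] and \[\int_{A_1}\Big[\tfrac12\tau_{ij,l}(Y_k)^l+\tau_{il}(Y_k)^l_{,j}\Big]\sigma_{ij}\,dx=\lambda_k\quad(k=1,2,3),\] with summation over $i,j,l$, where $Y_k=\frac{\partial}{\partial x^k}\times\vec x$.
   Context: Cartesian coordinates on $\mathbb R^3$; commas denote partial derivatives, and $\times$ the cross product. $L\sigma=\sum_{i,j}(\sigma_{ij,ij}-\sigma_{ii,jj})$ is the linearization of scalar curvature at the Euclidean metric. $\sigma(x)=\sigma(-x)$ means the Cartesian components are even functions. *)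

theory Defs
  imports "HOL-Analysis.Analysis"
begin

definition pd :: "3 \<Rightarrow> (real^3 \<Rightarrow> real) \<Rightarrow> real^3 \<Rightarrow> real" where
  "pd i f x = frechet_derivative f (at x) (axis i 1)"

fun iter_pd :: "3 list \<Rightarrow> (real^3 \<Rightarrow> real) \<Rightarrow> real^3 \<Rightarrow> real" where
  "iter_pd [] f = f"
| "iter_pd (i # ds) f = pd i (iter_pd ds f)"

definition smooth :: "(real^3 \<Rightarrow> real) \<Rightarrow> bool" where
  "smooth f \<longleftrightarrow> (\<forall>ds. (\<forall>x. iter_pd ds f differentiable (at x)) \<and> continuous_on UNIV (iter_pd ds f))"

definition smooth_sym_tensor :: "(real^3 \<Rightarrow> real^3^3) \<Rightarrow> bool" where
  "smooth_sym_tensor \<sigma> \<longleftrightarrow>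
     (\<forall>i j. smooth (\<lambda>x. \<sigma> x $ i $ j)) \<and> (\<forall>x i j. \<sigma> x $ i $ j = \<sigma> x $ j $ i)"

definition tsupport :: "(real^3 \<Rightarrow> real^3^3) \<Rightarrow> (real^3) set" where
  "tsupport \<sigma> = closure {x. \<sigma> x \<noteq> 0}"

definition A1 :: "(real^3) set" where
  "A1 = {x. 1 < norm x \<and> norm x < 2}"

definition Lin :: "(real^3 \<Rightarrow> real^3^3) \<Rightarrow> real^3 \<Rightarrow> real" where
  "Lin \<sigma> x = (\<Sum>i\<in>UNIV. \<Sum>j\<in>UNIV.
      pd j (pd i (\<lambda>y. \<sigma> y $ i $ j)) x - pd j (pd j (\<lambda>y. \<sigma> y $ i $ i)) x)"

definition Y :: "3 \<Rightarrow> real^3 \<Rightarrow> real^3" where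
  "Y k x = cross3 (axis k 1) x"

end

theory Submission
  imports Defs "HOL-Computational_Algebra.Polynomial"
begin

text \<open>Take two radial bumps, \<open>shell_A\<close> supported in \<open>2 < |x|\<^sup>2 < 3\<close> and \<open>shell_B\<close> in
  \<open>3.1 < |x|\<^sup>2 < 3.9\<close>. Let \<open>\<tau>\<close> be the sum of the Airy stresses of \<open>shell_A\<close> in the
  \<open>(x\<^sub>1,x\<^sub>2)\<close>-plane and of \<open>shell_B\<close> in the \<open>(x\<^sub>2,x\<^sub>3)\<close>-plane, so that \<open>\<tau>\<close> is
  divergence free, and let \<open>\<sigma>\<close> be an off-diagonal tensor whose entries are first derivatives
  of the potentials \<open>c\<^sub>1 \<partial>\<^sub>1 shell_A + c\<^sub>2 \<partial>\<^sub>2 shell_A\<close> and \<open>c\<^sub>3 \<partial>\<^sub>3 shell_B\<close>, arranged so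
  that \<open>L \<sigma> = 0\<close>. Since the two supports are disjoint, the \<open>k\<close>-th integrand is pointwise
  \<open>c\<^sub>k E\<^sub>k\<close> plus terms that are odd under a coordinate reflection, where \<open>E\<^sub>k\<close> is a nonzero sum of
  squares of second derivatives of a shell. Hence the \<open>k\<close>-th integral is \<open>c\<^sub>k\<close> times a positive
  weight, and \<open>c\<^sub>k\<close> is solved for. Smoothness comes from working in the algebra generated by
  the coordinates and the functions \<open>f\<^sup>(\<^sup>n\<^sup>) (\<alpha> + \<beta> |x|\<^sup>2)\<close>, where \<open>f (t) = exp (-1/t)\<close> for
  \<open>t > 0\<close> and \<open>f (t) = 0\<close> otherwise: it is closed under partial differentiation.\<close>

section \<open>The flat function \<open>exp (-1/t)\<close> and its derivatives\<close>

lemma poly_times_exp_neg_tendsto_0: "((\<lambda>u. poly p u * exp (-u)) \<longlongrightarrow> (0::real)) at_top"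
proof -
  have "(\<lambda>u. poly p u * exp (-u)) = (\<lambda>u. \<Sum>i\<le>degree p. coeff p i * (u ^ i / exp u))"
    by (rule ext) (simp add: poly_altdef sum_distrib_right exp_minus divide_inverse mult.assoc)
  then show ?thesis
    by (simp only:) (intro tendsto_null_sum tendsto_mult_right_zero tendsto_power_div_exp_0)
qed

text \<open>For \<open>t > 0\<close> the \<open>n\<close>-th derivative of \<open>exp (-1/t)\<close> is \<open>p\<^sub>n (1/t) exp (-1/t)\<close>,
  where \<open>p\<^sub>n\<^sub>+\<^sub>1 (u) = u\<^sup>2 (p\<^sub>n (u) - p\<^sub>n' (u))\<close>.\<close>

fun flat_poly :: "nat \<Rightarrow> real poly" where
  "flat_poly 0 = 1"
| "flat_poly (Suc n) = [:0, 0, 1:] * (flat_poly n - pderiv (flat_poly n))"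

definition flat :: "nat \<Rightarrow> real \<Rightarrow> real" where
  "flat n t = (if t > 0 then poly (flat_poly n) (1/t) * exp (-1/t) else 0)"

lemma flat_nonpos: "t \<le> 0 \<Longrightarrow> flat n t = 0"
  by (simp add: flat_def)

lemma flat_0_pos: "t > 0 \<Longrightarrow> flat 0 t = exp (-1/t)"
  by (simp add: flat_def)

lemma flat_Suc_0_pos: "t > 0 \<Longrightarrow> flat (Suc 0) t = exp (-1/t) / t\<^sup>2"
  by (simp add: flat_def power2_eq_square)

lemma has_real_derivative_flat_pos:
  assumes "t > 0"
  shows "((\<lambda>t. poly (flat_poly n) (1/t) * exp (-1/t)) has_real_derivative
           poly (flat_poly (Suc n)) (1/t) * exp (-1/t)) (at t)"
proof -
  have "((\<lambda>t. poly (flat_poly n) (1/t) * exp (-1/t)) has_real_derivative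
      poly (pderiv (flat_poly n)) (1/t) * (- 1 / t\<^sup>2) * exp (-1/t)
      + poly (flat_poly n) (1/t) * (exp (-1/t) * (1/t\<^sup>2))) (at t)"
    using assms
    by (auto intro!: derivative_eq_intros DERIV_chain2[OF poly_DERIV] simp: power2_eq_square)
  then show ?thesis
    by (simp add: algebra_simps power2_eq_square)
qed

text \<open>At \<open>0\<close> the right difference quotient is \<open>q (1/t) exp (-1/t)\<close> with \<open>q = x p\<^sub>n\<close>,
  which tends to \<open>0\<close>.\<close>

lemma has_real_derivative_flat_0: "(flat n has_real_derivative 0) (at 0)"
proof -
  have left: "((\<lambda>t. flat n t / t) \<longlongrightarrow> 0) (at_left 0)"
    by (rule tendsto_eventually)
       (auto simp: eventually_at_left_field flat_def intro: exI[of _ "-1"])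
  have "\<forall>\<^sub>F u in at_top. poly ([:0, 1:] * flat_poly n) u * exp (-u) = flat n (inverse u) / inverse u"
    using eventually_gt_at_top[of 0] by eventually_elim (simp add: flat_def divide_inverse mult_ac)
  with poly_times_exp_neg_tendsto_0 have "((\<lambda>u. flat n (inverse u) / inverse u) \<longlongrightarrow> 0) at_top"
    by (rule Lim_transform_eventually)
  then have right: "((\<lambda>t. flat n t / t) \<longlongrightarrow> 0) (at_right 0)"
    unfolding filterlim_at_right_to_top .
  have "((\<lambda>t. (flat n t - flat n 0) / (t - 0)) \<longlongrightarrow> 0) (at 0)"
    using filterlim_split_at[OF left right] by (simp add: flat_def)
  then show ?thesis
    unfolding has_field_derivative_iff .
qed

lemma has_real_derivative_flat: "(flat n has_real_derivative flat (Suc n) t) (at t)"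
proof -
  consider "t > 0" | "t < 0" | "t = 0" by linarith
  then show ?thesis
  proof cases
    case 1
    have "(flat n has_real_derivative poly (flat_poly (Suc n)) (1/t) * exp (-1/t)) (at t)"
      by (rule has_field_derivative_transform_within_open[OF has_real_derivative_flat_pos[OF 1],
            of "{0<..}"]) (use 1 in \<open>auto simp: flat_def\<close>)
    with 1 show ?thesis by (simp add: flat_def)
  next
    case 2
    have "(flat n has_real_derivative 0) (at t)"
      by (rule has_field_derivative_transform_within_open[of "\<lambda>_. 0" _ _ "{..<0}"])
         (use 2 in \<open>auto simp: flat_def\<close>)
    with 2 show ?thesis by (simp add: flat_nonpos)
  next
    case 3
    then show ?thesis using has_real_derivative_flat_0 by (simp add: flat_def)
  qed
qed

section \<open>An algebra of smooth functions closed under partial derivatives\<close>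

definition flat_radial :: "nat \<Rightarrow> real \<Rightarrow> real \<Rightarrow> real^3 \<Rightarrow> real" where
  "flat_radial n c d x = flat n (c + d * (x \<bullet> x))"

lemma has_derivative_flat_radial:
  "(flat_radial n c d has_derivative (\<lambda>h. flat_radial (Suc n) c d x * (d * (h \<bullet> x + x \<bullet> h)))) (at x)"
proof -
  have "((\<lambda>x. c + d * (x \<bullet> x)) has_derivative (\<lambda>h. d * (h \<bullet> x + x \<bullet> h))) (at x)"
    by (auto intro!: derivative_eq_intros)
  from has_derivative_compose[OF this has_real_derivative_flat[unfolded has_field_derivative_def]]
  show ?thesis
    by (simp add: flat_radial_def[abs_def] o_def)
qed

inductive_set smooth_alg :: "(real^3 \<Rightarrow> real) set" where
  smooth_alg_const [simp]: "(\<lambda>x. c) \<in> smooth_alg"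
| smooth_alg_coord [simp]: "(\<lambda>x. x $ i) \<in> smooth_alg"
| smooth_alg_add [simp]: "f \<in> smooth_alg \<Longrightarrow> g \<in> smooth_alg \<Longrightarrow> (\<lambda>x. f x + g x) \<in> smooth_alg"
| smooth_alg_mult [simp]: "f \<in> smooth_alg \<Longrightarrow> g \<in> smooth_alg \<Longrightarrow> (\<lambda>x. f x * g x) \<in> smooth_alg"
| smooth_alg_flat_radial [simp]: "flat_radial n c d \<in> smooth_alg"

lemma smooth_alg_uminus [simp]: "f \<in> smooth_alg \<Longrightarrow> (\<lambda>x. - f x) \<in> smooth_alg"
  using smooth_alg_mult[OF smooth_alg_const[of "-1"]] by simp

lemma smooth_alg_diff [simp]: "f \<in> smooth_alg \<Longrightarrow> g \<in> smooth_alg \<Longrightarrow> (\<lambda>x. f x - g x) \<in> smooth_alg"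
  using smooth_alg_add[OF _ smooth_alg_uminus] by simp

lemma smooth_alg_power2 [simp]: "f \<in> smooth_alg \<Longrightarrow> (\<lambda>x. (f x)\<^sup>2) \<in> smooth_alg"
  unfolding power2_eq_square by simp

lemma smooth_alg_has_derivative:
  assumes "f \<in> smooth_alg"
  shows "\<exists>F. (\<forall>x. (f has_derivative F x) (at x)) \<and> (\<forall>i. (\<lambda>x. F x (axis i 1)) \<in> smooth_alg)"
  using assms
proof induction
  case (smooth_alg_const c)
  show ?case by (rule exI[of _ "\<lambda>x h. 0"]) simp
next
  case (smooth_alg_coord i)
  show ?case
    by (rule exI[of _ "\<lambda>x h. h $ i"]) (auto intro!: bounded_linear_imp_has_derivative)
next
  case (smooth_alg_add f g)
  then obtain F G where "\<forall>x. (f has_derivative F x) (at x)" "\<forall>i. (\<lambda>x. F x (axis i 1)) \<in> smooth_alg"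
    and "\<forall>x. (g has_derivative G x) (at x)" "\<forall>i. (\<lambda>x. G x (axis i 1)) \<in> smooth_alg" by blast
  then show ?case
    by (intro exI[of _ "\<lambda>x h. F x h + G x h"]) (auto intro!: derivative_eq_intros)
next
  case (smooth_alg_mult f g)
  then obtain F G where "\<forall>x. (f has_derivative F x) (at x)" "\<forall>i. (\<lambda>x. F x (axis i 1)) \<in> smooth_alg"
    and "\<forall>x. (g has_derivative G x) (at x)" "\<forall>i. (\<lambda>x. G x (axis i 1)) \<in> smooth_alg" by blast
  with smooth_alg_mult.hyps show ?case
    by (intro exI[of _ "\<lambda>x h. f x * G x h + F x h * g x"]) (auto intro!: derivative_eq_intros)
next
  case (smooth_alg_flat_radial n c d)
  show ?case
    by (intro exI[of _ "\<lambda>x h. flat_radial (Suc n) c d x * (d * (h \<bullet> x + x \<bullet> h))"]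
          conjI allI has_derivative_flat_radial) (simp add: inner_axis inner_commute)
qed

lemma smooth_alg_differentiable: "f \<in> smooth_alg \<Longrightarrow> f differentiable (at x)"
  using smooth_alg_has_derivative unfolding differentiable_def by blast

lemma smooth_alg_continuous_on: "f \<in> smooth_alg \<Longrightarrow> continuous_on S f"
  by (meson smooth_alg_differentiable continuous_at_imp_continuous_on
      differentiable_imp_continuous_within)

lemma pd_has_derivative: "(f has_derivative F) (at x) \<Longrightarrow> pd i f x = F (axis i 1)"
  unfolding pd_def by (metis frechet_derivative_at)

lemma pd_smooth_alg [simp]: "f \<in> smooth_alg \<Longrightarrow> pd i f \<in> smooth_alg"
proof -
  assume "f \<in> smooth_alg"
  then obtain F where "\<forall>x. (f has_derivative F x) (at x)" "\<forall>i. (\<lambda>x. F x (axis i 1)) \<in> smooth_alg"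
    using smooth_alg_has_derivative by blast
  moreover from this(1) have "pd i f = (\<lambda>x. F x (axis i 1))"
    using pd_has_derivative by blast
  ultimately show ?thesis by simp
qed

lemma iter_pd_smooth_alg: "f \<in> smooth_alg \<Longrightarrow> iter_pd ds f \<in> smooth_alg"
  by (induction ds) auto

lemma smooth_alg_smooth: "f \<in> smooth_alg \<Longrightarrow> smooth f"
  unfolding smooth_def
  using iter_pd_smooth_alg smooth_alg_differentiable smooth_alg_continuous_on by blast

lemma smooth_alg_has_frechet_derivative:
  "f \<in> smooth_alg \<Longrightarrow> (f has_derivative frechet_derivative f (at x)) (at x)"
  using smooth_alg_differentiable frechet_derivative_works by blast

lemma pd_const [simp]: "pd i (\<lambda>x. c) = (\<lambda>x. 0)"
  using pd_has_derivative[OF has_derivative_const] by auto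

lemma pd_coord [simp]: "pd i (\<lambda>x. x $ j) = (\<lambda>x. if i = j then 1 else 0)"
proof
  fix x :: "real^3"
  have "((\<lambda>x::real^3. x $ j) has_derivative (\<lambda>h. h $ j)) (at x)"
    by (rule bounded_linear_imp_has_derivative) auto
  then show "pd i (\<lambda>x. x $ j) x = (if i = j then 1 else 0)"
    by (simp add: pd_has_derivative axis_def)
qed

lemma pd_add [simp]:
  "f \<in> smooth_alg \<Longrightarrow> g \<in> smooth_alg \<Longrightarrow> pd i (\<lambda>x. f x + g x) = (\<lambda>x. pd i f x + pd i g x)"
  by (rule ext, subst pd_has_derivative[OF has_derivative_add[OF
        smooth_alg_has_frechet_derivative smooth_alg_has_frechet_derivative]])
     (auto simp: pd_def)

lemma pd_mult [simp]:
  "f \<in> smooth_alg \<Longrightarrow> g \<in> smooth_alg \<Longrightarrow> pd i (\<lambda>x. f x * g x) = (\<lambda>x. pd i f x * g x + f x * pd i g x)"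
  by (rule ext, subst pd_has_derivative[OF has_derivative_mult[OF
        smooth_alg_has_frechet_derivative smooth_alg_has_frechet_derivative]])
     (auto simp: pd_def)

lemma pd_uminus [simp]: "f \<in> smooth_alg \<Longrightarrow> pd i (\<lambda>x. - f x) = (\<lambda>x. - pd i f x)"
  by (rule ext, subst pd_has_derivative[OF has_derivative_minus[OF smooth_alg_has_frechet_derivative]])
     (auto simp: pd_def)

lemma pd_diff [simp]:
  "f \<in> smooth_alg \<Longrightarrow> g \<in> smooth_alg \<Longrightarrow> pd i (\<lambda>x. f x - g x) = (\<lambda>x. pd i f x - pd i g x)"
  by (rule ext, subst pd_has_derivative[OF has_derivative_diff[OF
        smooth_alg_has_frechet_derivative smooth_alg_has_frechet_derivative]])
     (auto simp: pd_def)

lemma pd_flat_radial [simp]: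
  "pd i (flat_radial n c d) = (\<lambda>x. flat_radial (Suc n) c d x * (2 * d * x $ i))"
  by (rule ext, subst pd_has_derivative[OF has_derivative_flat_radial])
     (simp add: inner_axis inner_commute)

lemma pd_commute: "f \<in> smooth_alg \<Longrightarrow> pd i (pd j f) = pd j (pd i f)"
proof (induction rule: smooth_alg.induct)
  case (smooth_alg_mult f g)
  then show ?case by (simp add: algebra_simps)
next
  case (smooth_alg_flat_radial n c d)
  then show ?case by (simp add: algebra_simps)
qed simp_all

lemma iter_pd_eq_0_on_open:
  assumes "f \<in> smooth_alg" "open U" "\<And>y. y \<in> U \<Longrightarrow> f y = 0" "x \<in> U"
  shows "iter_pd ds f x = 0"
  using assms(4)
proof (induction ds arbitrary: x)
  case Nil
  then show ?case using assms(3) by simp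
next
  case (Cons i ds)
  have "(iter_pd ds f has_derivative (\<lambda>h. 0)) (at x)"
    by (rule has_derivative_transform_within_open[OF has_derivative_const assms(2) Cons.prems])
       (use Cons.IH in auto)
  then show ?case
    using pd_has_derivative by fastforce
qed

lemma pd_compose_symmetry:
  assumes f: "f \<in> smooth_alg" and R: "linear R" and sym: "\<And>x. f (R x) = e * f x"
    and axis: "R (axis i 1) = r *\<^sub>R axis i 1" and r: "r * r = 1"
  shows "pd i f (R x) = (e * r) * pd i f x"
proof -
  let ?D = "\<lambda>y. frechet_derivative f (at y)"
  have F: "(f has_derivative ?D y) (at y)" for y
    using smooth_alg_has_frechet_derivative[OF f] .
  have "((\<lambda>y. f (R y)) has_derivative ?D (R x) \<circ> R) (at x)"
    using has_derivative_compose[OF linear_imp_has_derivative[OF R] F] by (simp add: o_def)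
  moreover have "((\<lambda>y. f (R y)) has_derivative (\<lambda>h. e * ?D x h)) (at x)"
    unfolding sym using F[of x] by (auto intro!: derivative_eq_intros)
  ultimately have "?D (R x) \<circ> R = (\<lambda>h. e * ?D x h)"
    by (rule has_derivative_unique)
  then have "?D (R x) (R (axis i 1)) = e * ?D x (axis i 1)"
    by (metis comp_apply)
  then have rel: "r * pd i f (R x) = e * pd i f x"
    unfolding pd_def axis linear_cmul[OF has_derivative_linear[OF F]] by simp
  have "pd i f (R x) = r * (r * pd i f (R x))"
    using r by (simp add: mult.assoc[symmetric])
  also have "\<dots> = (e * r) * pd i f x"
    by (simp add: rel mult_ac)
  finally show ?thesis .
qed

definition reflect :: "3 \<Rightarrow> real^3 \<Rightarrow> real^3" where
  "reflect m x = (\<chi> k. (if k = m then -1 else 1) * x $ k)"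

lemma linear_reflect: "linear (reflect m)"
  by (auto simp: linear_iff vec_eq_iff reflect_def algebra_simps)

lemma inner_reflect [simp]: "reflect m x \<bullet> reflect m x = x \<bullet> x"
  unfolding inner_vec_def by (rule sum.cong) (auto simp: reflect_def)

lemma pd_reflect:
  assumes "f \<in> smooth_alg" "\<And>x. f (reflect m x) = e * f x"
  shows "pd i f (reflect m x) = (e * (if i = m then -1 else 1)) * pd i f x"
  by (rule pd_compose_symmetry[OF assms(1) linear_reflect assms(2)])
     (auto simp: vec_eq_iff reflect_def axis_def)

lemma pd_neg:
  assumes "f \<in> smooth_alg" "\<And>x. f (- x) = e * f x"
  shows "pd i f (- x) = - e * pd i f x"
  using pd_compose_symmetry[OF assms(1) _ assms(2), of i "-1"] by (simp add: linear_iff)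

lemma pd_pd_even:
  assumes "f \<in> smooth_alg" "\<And>x. f (- x) = f x"
  shows "pd a (pd b f) (- x) = pd a (pd b f) x"
proof -
  have "pd b f (- y) = (-1) * pd b f y" for y
    using pd_neg[OF assms(1), where e=1] assms(2) by simp
  from pd_neg[OF pd_smooth_alg[OF assms(1)] this] show ?thesis
    by simp
qed

section \<open>Bump functions supported in spherical shells\<close>

definition shell :: "real \<Rightarrow> real \<Rightarrow> real^3 \<Rightarrow> real" where
  "shell a b x = flat_radial 0 (- a) 1 x * flat_radial 0 b (- 1) x"

lemma shell_smooth_alg [simp]: "shell a b \<in> smooth_alg"
  unfolding shell_def[abs_def] by simp

lemma shell_eq_0: "x \<bullet> x \<le> a \<or> b \<le> x \<bullet> x \<Longrightarrow> shell a b x = 0"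
  by (auto simp: shell_def flat_radial_def flat_nonpos)

lemma iter_pd_shell_eq_0:
  assumes "x \<bullet> x < a \<or> b < x \<bullet> x"
  shows "iter_pd ds (shell a b) x = 0"
proof (rule iter_pd_eq_0_on_open[OF shell_smooth_alg])
  show "open ({y. y \<bullet> y < a} \<union> {y. b < y \<bullet> y})"
    by (intro open_Un open_Collect_less continuous_intros)
qed (use assms shell_eq_0 in auto)

lemma pd_shell_eq_0:
  assumes "x \<bullet> x < a \<or> b < x \<bullet> x"
  shows "shell a b x = 0" "pd i (shell a b) x = 0" "pd i (pd j (shell a b)) x = 0"
    "pd i (pd j (pd k (shell a b))) x = 0"
  using iter_pd_shell_eq_0[OF assms, of "[]"] iter_pd_shell_eq_0[OF assms, of "[i]"]
    iter_pd_shell_eq_0[OF assms, of "[i, j]"] iter_pd_shell_eq_0[OF assms, of "[i, j, k]"]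
  by simp_all

lemma shell_neg: "shell a b (- x) = shell a b x"
  by (simp add: shell_def flat_radial_def)

lemma shell_reflect: "shell a b (reflect m x) = shell a b x"
  by (simp add: shell_def flat_radial_def)

text \<open>Where the coordinate \<open>x\<^sub>i\<close> vanishes, \<open>\<partial>\<^sub>i\<^sub>i shell\<close> is
  \<open>2 (flat\<^sub>1(u) flat\<^sub>0(v) - flat\<^sub>0(u) flat\<^sub>1(v))\<close> with \<open>u = |x|\<^sup>2 - a\<close>, \<open>v = b - |x|\<^sup>2\<close>;
  this is positive as soon as \<open>0 < u < v\<close>, because \<open>flat\<^sub>1(t) = flat\<^sub>0(t) / t\<^sup>2\<close>.\<close>

lemma pd_pd_shell_pos:
  assumes "x $ i = 0" "a < x \<bullet> x" "2 * (x \<bullet> x) < a + b"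
  shows "0 < pd i (pd i (shell a b)) x"
proof -
  define u v where "u = x \<bullet> x - a" and "v = b - x \<bullet> x"
  have uv: "0 < u" "u < v"
    using assms(2,3) by (auto simp: u_def v_def)
  have "pd i (pd i (shell a b)) x
      = 2 * (flat_radial (Suc 0) (- a) 1 x * flat_radial 0 b (- 1) x
             - flat_radial 0 (- a) 1 x * flat_radial (Suc 0) b (- 1) x)"
    using assms(1) by (simp add: shell_def[abs_def])
  also have "\<dots> = 2 * (flat (Suc 0) u * flat 0 v - flat 0 u * flat (Suc 0) v)"
    by (simp add: flat_radial_def u_def v_def)
  also have "\<dots> = 2 * exp (-1/u) * exp (-1/v) * (1 / u\<^sup>2 - 1 / v\<^sup>2)"
    using uv by (simp add: flat_0_pos flat_Suc_0_pos field_simps)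
  also have "0 < \<dots>"
  proof -
    have "1 / v\<^sup>2 < 1 / u\<^sup>2"
      using uv by (intro divide_strict_left_mono power_strict_mono) auto
    then show ?thesis by simp
  qed
  finally show ?thesis .
qed

section \<open>Integrals over a symmetric box\<close>

lemma has_integral_of_vanishing_outside:
  fixes f :: "'a::euclidean_space \<Rightarrow> real"
  assumes "continuous_on (cbox a b) f" "S \<subseteq> cbox a b" "\<And>x. x \<notin> S \<Longrightarrow> f x = 0"
  shows "(f has_integral integral (cbox a b) f) S"
proof -
  have "(f has_integral integral (cbox a b) f) (cbox a b)"
    using integrable_continuous[OF assms(1)] by (simp add: integrable_integral)
  moreover have "(\<lambda>x. if x \<in> S then f x else 0) = f"
    using assms(3) by auto
  ultimately show ?thesis
    using has_integral_restrict[OF assms(2), of f] by simp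
qed

lemma integral_pos_of_continuous_nonneg:
  fixes f :: "'a::euclidean_space \<Rightarrow> real"
  assumes "continuous_on (cbox a b) f" "box a b \<noteq> {}" "\<And>x. x \<in> cbox a b \<Longrightarrow> 0 \<le> f x"
    and "x0 \<in> cbox a b" "0 < f x0"
  shows "0 < integral (cbox a b) f"
proof -
  have "integral (cbox a b) f \<noteq> 0"
    using integral_cbox_eq_0_iff[OF assms(1-3)] assms(4,5) by auto
  moreover have "0 \<le> integral (cbox a b) f"
    by (rule integral_nonneg[OF integrable_continuous[OF assms(1)]]) (use assms(3) in auto)
  ultimately show ?thesis by linarith
qed

lemma reflect_reflect [simp]: "reflect m (reflect m x) = x"
  by (simp add: reflect_def vec_eq_iff)

lemma reflect_in_cbox: "x \<in> cbox (- c) c \<Longrightarrow> reflect m x \<in> cbox (- c) c"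
proof (unfold mem_box_cart, intro allI)
  fix k
  assume "\<forall>i. (- c) $ i \<le> x $ i \<and> x $ i \<le> c $ i"
  then have "- c $ k \<le> x $ k" "x $ k \<le> c $ k"
    by auto
  then show "(- c) $ k \<le> reflect m x $ k \<and> reflect m x $ k \<le> c $ k"
    by (auto simp: reflect_def)
qed

lemma reflect_image_cbox: "reflect m ` cbox (- c) c = cbox (- c) c"
proof
  show "cbox (- c) c \<subseteq> reflect m ` cbox (- c) c"
  proof
    fix x assume "x \<in> cbox (- c) c"
    then have "reflect m x \<in> cbox (- c) c"
      by (rule reflect_in_cbox)
    then show "x \<in> reflect m ` cbox (- c) c"
      by (rule image_eqI[rotated]) simp
  qed
qed (use reflect_in_cbox in blast)

lemma integral_odd_reflect_eq_0:
  fixes f :: "real^3 \<Rightarrow> real"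
  assumes "continuous_on (cbox (- c) c) f" "\<And>x. f (reflect m x) = - f x"
  shows "integral (cbox (- c) c) f = 0"
proof -
  define s :: "3 \<Rightarrow> real" where "s k = (if k = m then -1 else 1)" for k
  let ?I = "integral (cbox (- c) c) f"
  have int: "(f has_integral ?I) (cbox (- c) c)"
    using integrable_continuous[OF assms(1)] by (simp add: integrable_integral)
  have s_mult: "(\<chi> k. s k * x $ k) = reflect m x" and s_div: "(\<chi> k. x $ k / s k) = reflect m x" for x
    by (auto simp: reflect_def s_def vec_eq_iff)
  have img: "(\<lambda>x. \<chi> k. x $ k / s k) ` cbox (- c) c = cbox (- c) c"
    unfolding s_div by (rule reflect_image_cbox)
  have s_abs: "\<bar>s k\<bar> = 1" for k
    by (simp add: s_def)
  then have s_nz: "s k \<noteq> 0" for k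
    by (metis abs_zero zero_neq_one)
  from has_integral_stretch_cart[OF int, of s, OF s_nz]
  have "((\<lambda>x. f (reflect m x)) has_integral ?I) (cbox (- c) c)"
    unfolding s_mult img abs_prod s_abs by simp
  then have "((\<lambda>x. - f x) has_integral ?I) (cbox (- c) c)"
    using assms(2) by simp
  with has_integral_neg[OF int] have "?I = - ?I"
    using has_integral_unique by blast
  then show ?thesis by simp
qed

section \<open>The tensor fields\<close>

lemma smooth_sym_tensor_of_components:
  assumes "\<And>i j. F i j \<in> smooth_alg" "\<And>i j. F i j = F j i"
  shows "smooth_sym_tensor (\<lambda>x. \<chi> i j. F i j x)"
  using assms smooth_alg_smooth by (simp add: smooth_sym_tensor_def)

lemma tsupport_of_components:
  assumes "compact S" "\<And>x i j. x \<notin> S \<Longrightarrow> F i j x = 0"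
  shows "compact (tsupport (\<lambda>x. \<chi> i j. F i j x))" "tsupport (\<lambda>x. \<chi> i j. F i j x) \<subseteq> S"
proof -
  have sub: "{x. (\<chi> i j. F i j x) \<noteq> 0} \<subseteq> S"
    using assms(2) by (auto simp: vec_eq_iff)
  show "tsupport (\<lambda>x. \<chi> i j. F i j x) \<subseteq> S"
    unfolding tsupport_def by (rule closure_minimal[OF sub compact_imp_closed[OF assms(1)]])
  show "compact (tsupport (\<lambda>x. \<chi> i j. F i j x))"
    unfolding tsupport_def using bounded_subset[OF compact_imp_bounded[OF assms(1)] sub] by simp
qed

lemma pd_pd_reflect:
  assumes "f \<in> smooth_alg" "\<And>x. f (reflect m x) = f x"
  shows "pd a (pd b f) (reflect m x)
    = (if a = m then -1 else 1) * (if b = m then -1 else 1) * pd a (pd b f) x"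
proof -
  have "pd b f (reflect m y) = (if b = m then -1 else 1) * pd b f y" for y
    using pd_reflect[OF assms(1), where e=1] assms(2) by simp
  from pd_reflect[OF pd_smooth_alg[OF assms(1)] this] show ?thesis
    by simp
qed

lemma pd_Y: "pd j (\<lambda>y. Y k y $ l) x = Y k (axis j 1) $ l"
proof -
  have "bounded_linear (\<lambda>y. Y k y $ l)"
    unfolding Y_def
    by (intro bounded_linear_compose[OF bounded_linear_vec_nth]
        bounded_bilinear.bounded_linear_right[OF bilinear_cross[THEN bilinear_conv_bounded_bilinear[THEN iffD1]]])
  from pd_has_derivative[OF bounded_linear_imp_has_derivative[OF this]] show ?thesis .
qed

lemma Y_axis_component:
  "Y k (axis j 1) $ l =
    (if (k, j, l) \<in> {(1, 2, 3), (2, 3, 1), (3, 1, 2)} then 1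
     else if (k, j, l) \<in> {(2, 1, 3), (3, 2, 1), (1, 3, 2)} then -1 else 0)"
  unfolding Y_def using exhaust_3[of k] exhaust_3[of j] exhaust_3[of l]
  by (auto simp: cross_components axis_def)

abbreviation shell_A :: "real^3 \<Rightarrow> real" where "shell_A \<equiv> shell 2 3"
abbreviation shell_B :: "real^3 \<Rightarrow> real" where "shell_B \<equiv> shell (31/10) (39/10)"

definition shell_region :: "(real^3) set" where
  "shell_region = {x. 2 \<le> x \<bullet> x \<and> x \<bullet> x \<le> 39/10}"

lemma A1_subset_cbox: "A1 \<subseteq> cbox (- 2) 2"
proof
  fix x :: "real^3"
  assume "x \<in> A1"
  then have "- 2 \<le> x $ i \<and> x $ i \<le> 2" for i
    using component_le_norm_cart[of x i] by (auto simp: A1_def abs_le_iff)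
  then show "x \<in> cbox (- 2) 2"
    by (simp add: mem_box_cart)
qed

lemma shell_region_subset_A1: "shell_region \<subseteq> A1"
proof
  fix x :: "real^3"
  assume "x \<in> shell_region"
  then have "2 \<le> x \<bullet> x" "x \<bullet> x \<le> 39/10"
    by (auto simp: shell_region_def)
  then have "1 < sqrt (x \<bullet> x)" "sqrt (x \<bullet> x) < 2"
    by (auto intro!: real_less_rsqrt real_less_lsqrt simp: power2_eq_square)
  then show "x \<in> A1"
    by (simp add: A1_def norm_eq_sqrt_inner)
qed

lemma compact_shell_region: "compact shell_region"
  unfolding compact_eq_bounded_closed
proof
  show "bounded shell_region"
    using shell_region_subset_A1 A1_subset_cbox bounded_cbox bounded_subset by blast
  show "closed shell_region"
    unfolding shell_region_def by (intro closed_Collect_conj closed_Collect_le continuous_intros)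
qed

lemma shells_vanish_outside:
  assumes "x \<notin> shell_region"
  shows "x \<bullet> x < 2 \<or> 3 < x \<bullet> x" "x \<bullet> x < 31/10 \<or> 39/10 < x \<bullet> x"
  using assms by (auto simp: shell_region_def)

definition tau_comp :: "3 \<Rightarrow> 3 \<Rightarrow> real^3 \<Rightarrow> real" where
  "tau_comp i j =
    (if i = 1 \<and> j = 1 then pd 2 (pd 2 shell_A)
     else if i = 2 \<and> j = 2 then (\<lambda>x. pd 1 (pd 1 shell_A) x + pd 3 (pd 3 shell_B) x)
     else if i = 3 \<and> j = 3 then pd 2 (pd 2 shell_B)
     else if (i = 1 \<and> j = 2) \<or> (i = 2 \<and> j = 1) then (\<lambda>x. - pd 1 (pd 2 shell_A) x)
     else if (i = 2 \<and> j = 3) \<or> (i = 3 \<and> j = 2) then (\<lambda>x. - pd 2 (pd 3 shell_B) x)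
     else (\<lambda>x. 0))"

definition potential_A :: "real^3 \<Rightarrow> real^3 \<Rightarrow> real" where
  "potential_A c x = c $ 1 * pd 1 shell_A x + c $ 2 * pd 2 shell_A x"

definition potential_B :: "real^3 \<Rightarrow> real^3 \<Rightarrow> real" where
  "potential_B c x = c $ 3 * pd 3 shell_B x"

text \<open>\<open>\<sigma>\<close> has zero diagonal, so \<open>L \<sigma> = 2 (\<sigma>\<^sub>1\<^sub>2\<^sub>,\<^sub>1\<^sub>2 + \<sigma>\<^sub>1\<^sub>3\<^sub>,\<^sub>1\<^sub>3 + \<sigma>\<^sub>2\<^sub>3\<^sub>,\<^sub>2\<^sub>3)\<close>, and its entries are
  arranged so that the third derivatives of the potentials cancel in pairs.\<close>

definition sigma_comp :: "real^3 \<Rightarrow> 3 \<Rightarrow> 3 \<Rightarrow> real^3 \<Rightarrow> real" where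
  "sigma_comp c i j =
    (if (i = 1 \<and> j = 3) \<or> (i = 3 \<and> j = 1) then (\<lambda>x. pd 2 (potential_A c) x - pd 2 (potential_B c) x)
     else if (i = 2 \<and> j = 3) \<or> (i = 3 \<and> j = 2) then (\<lambda>x. - pd 1 (potential_A c) x)
     else if (i = 1 \<and> j = 2) \<or> (i = 2 \<and> j = 1) then pd 3 (potential_B c)
     else (\<lambda>x. 0))"

definition tau_field :: "real^3 \<Rightarrow> real^3^3" where
  "tau_field x = (\<chi> i j. tau_comp i j x)"

definition sigma_field :: "real^3 \<Rightarrow> real^3 \<Rightarrow> real^3^3" where
  "sigma_field c x = (\<chi> i j. sigma_comp c i j x)"

lemma tau_comp_smooth_alg: "tau_comp i j \<in> smooth_alg"
  by (simp add: tau_comp_def)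

lemma sigma_comp_smooth_alg: "sigma_comp c i j \<in> smooth_alg"
  by (simp add: sigma_comp_def potential_A_def[abs_def] potential_B_def[abs_def])

lemma tau_comp_commute: "tau_comp i j = tau_comp j i"
  using exhaust_3[of i] exhaust_3[of j] by (elim disjE) (simp_all add: tau_comp_def)

lemma sigma_comp_commute: "sigma_comp c i j = sigma_comp c j i"
  using exhaust_3[of i] exhaust_3[of j] by (elim disjE) (simp_all add: sigma_comp_def)

lemma tau_comp_eq_0: "x \<notin> shell_region \<Longrightarrow> tau_comp i j x = 0"
  using pd_shell_eq_0[OF shells_vanish_outside(1)]
    pd_shell_eq_0[OF shells_vanish_outside(2)]
  by (simp add: tau_comp_def)

lemma sigma_comp_eq_0: "x \<notin> shell_region \<Longrightarrow> sigma_comp c i j x = 0"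
  using pd_shell_eq_0[OF shells_vanish_outside(1)]
    pd_shell_eq_0[OF shells_vanish_outside(2)]
  by (simp add: sigma_comp_def potential_A_def[abs_def] potential_B_def[abs_def])

lemma tau_comp_neg: "tau_comp i j (- x) = tau_comp i j x"
  using pd_pd_even[OF shell_smooth_alg shell_neg]
  by (simp add: tau_comp_def)

lemma sigma_comp_neg: "sigma_comp c i j (- x) = sigma_comp c i j x"
  using pd_pd_even[OF shell_smooth_alg shell_neg]
  by (simp add: sigma_comp_def potential_A_def[abs_def] potential_B_def[abs_def])

lemma smooth_sym_tensor_tau_field: "smooth_sym_tensor tau_field"
  unfolding tau_field_def[abs_def]
  by (rule smooth_sym_tensor_of_components[OF tau_comp_smooth_alg tau_comp_commute])

lemma smooth_sym_tensor_sigma_field: "smooth_sym_tensor (sigma_field c)"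
  unfolding sigma_field_def[abs_def]
  by (rule smooth_sym_tensor_of_components[OF sigma_comp_smooth_alg sigma_comp_commute])

lemma tsupport_tau_field: "compact (tsupport tau_field)" "tsupport tau_field \<subseteq> A1"
  using tsupport_of_components[where F = tau_comp, OF compact_shell_region tau_comp_eq_0]
    shell_region_subset_A1
  unfolding tau_field_def[abs_def] by auto

lemma tsupport_sigma_field: "compact (tsupport (sigma_field c))" "tsupport (sigma_field c) \<subseteq> A1"
  using tsupport_of_components[where F = "sigma_comp c", OF compact_shell_region sigma_comp_eq_0]
    shell_region_subset_A1
  unfolding sigma_field_def[abs_def] by auto

lemma tau_field_neg: "tau_field (- x) = tau_field x"
  by (simp add: tau_field_def tau_comp_neg)

lemma sigma_field_neg: "sigma_field c (- x) = sigma_field c x"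
  by (simp add: sigma_field_def sigma_comp_neg)

lemma Lin_sigma_field: "Lin (sigma_field c) x = 0"
  by (simp add: Lin_def sigma_field_def sum_3 sigma_comp_def potential_A_def[abs_def]
      potential_B_def[abs_def] pd_commute)

lemma div_tau_field: "(\<Sum>i\<in>UNIV. pd i (\<lambda>y. tau_field y $ i $ j) x) = 0"
  using exhaust_3[of j] by (auto simp: tau_field_def sum_3 tau_comp_def pd_commute)

definition pairing :: "(real^3 \<Rightarrow> real^3^3) \<Rightarrow> (real^3 \<Rightarrow> real^3^3) \<Rightarrow> 3 \<Rightarrow> real^3 \<Rightarrow> real" where
  "pairing \<tau> \<sigma> k x = (\<Sum>i\<in>UNIV. \<Sum>j\<in>UNIV. \<Sum>l\<in>UNIV.
     ((1/2) * pd l (\<lambda>y. \<tau> y $ i $ j) x * Y k x $ l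
      + \<tau> x $ i $ l * pd j (\<lambda>y. Y k y $ l) x) * \<sigma> x $ i $ j)"

definition energy :: "3 \<Rightarrow> real^3 \<Rightarrow> real" where
  "energy k =
    (if k = 1 then (\<lambda>x. (pd 1 (pd 2 shell_A) x)\<^sup>2 + (pd 1 (pd 1 shell_A) x)\<^sup>2)
     else if k = 2 then (\<lambda>x. (pd 2 (pd 2 shell_A) x)\<^sup>2 + (pd 1 (pd 2 shell_A) x)\<^sup>2)
     else (\<lambda>x. (pd 3 (pd 3 shell_B) x)\<^sup>2 + (pd 2 (pd 3 shell_B) x)\<^sup>2))"

definition mixed_A :: "real^3 \<Rightarrow> real" where
  "mixed_A x = pd 1 (pd 2 shell_A) x * (pd 2 (pd 2 shell_A) x + pd 1 (pd 1 shell_A) x)"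

definition mixed_B :: "real^3 \<Rightarrow> real" where
  "mixed_B x = pd 2 (pd 3 shell_B) x * (pd 3 (pd 3 shell_B) x + pd 2 (pd 2 shell_B) x)"

text \<open>The term \<open>\<sigma> : \<nabla>\<^sub>Y \<tau>\<close> vanishes identically: \<open>\<sigma>\<close> is off-diagonal, \<open>\<tau>\<^sub>1\<^sub>3 = 0\<close>,
  \<open>\<sigma>\<^sub>1\<^sub>2\<close> and \<open>\<tau>\<^sub>2\<^sub>3\<close> vanish where \<open>shell_B\<close> does, \<open>\<sigma>\<^sub>2\<^sub>3\<close> and \<open>\<tau>\<^sub>1\<^sub>2\<close> where \<open>shell_A\<close> does.\<close>

lemma pairing_eq:
  "pairing tau_field (sigma_field c) k x =
    (if k = 1 then c $ 1 * energy 1 x + c $ 2 * mixed_A x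
     else if k = 2 then c $ 1 * mixed_A x + c $ 2 * energy 2 x + c $ 3 * mixed_B x
     else c $ 3 * energy 3 x)"
proof -
  have commute: "pd 1 (pd 2 shell_A) = pd 2 (pd 1 shell_A)" "pd 2 (pd 3 shell_B) = pd 3 (pd 2 shell_B)"
    by (simp_all add: pd_commute)
  note defs = pairing_def sum_3 tau_field_def sigma_field_def tau_comp_def sigma_comp_def
    potential_A_def[abs_def] potential_B_def[abs_def] pd_Y Y_axis_component
    energy_def mixed_A_def mixed_B_def commute power2_eq_square algebra_simps
  consider "x \<bullet> x < 2 \<or> 3 < x \<bullet> x" | "x \<bullet> x < 31/10 \<or> 39/10 < x \<bullet> x"
    by linarith
  then show ?thesis
  proof cases
    case 1
    show ?thesis
      using exhaust_3[of k] pd_shell_eq_0[OF 1] by (elim disjE) (simp_all add: defs)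
  next
    case 2
    show ?thesis
      using exhaust_3[of k] pd_shell_eq_0[OF 2] by (elim disjE) (simp_all add: defs)
  qed
qed

lemma energy_smooth_alg: "energy k \<in> smooth_alg"
  by (simp add: energy_def)

lemma energy_nonneg: "0 \<le> energy k x"
  by (simp add: energy_def)

lemma energy_pos:
  "0 < energy k (if k = 3 then axis 1 (9/5) else axis 3 (3/2))"
proof -
  have "(axis 3 (3/2) :: real^3) \<bullet> axis 3 (3/2) = 9/4" "(axis 1 (9/5) :: real^3) \<bullet> axis 1 (9/5) = 81/25"
    by (simp_all add: inner_axis_axis)
  note inner = this
  have comp: "axis k t $ i = 0" if "i \<noteq> k" for k i :: 3 and t :: real
    using that by (simp add: axis_def)
  have "0 < pd 1 (pd 1 shell_A) (axis 3 (3/2))" "0 < pd 2 (pd 2 shell_A) (axis 3 (3/2))"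
    "0 < pd 3 (pd 3 shell_B) (axis 1 (9/5))"
    using inner comp by (auto intro!: pd_pd_shell_pos)
  then show ?thesis
    using exhaust_3[of k] by (auto simp: energy_def intro: add_nonneg_pos add_pos_nonneg)
qed

lemma energy_eq_0: "x \<notin> shell_region \<Longrightarrow> energy k x = 0"
  using pd_shell_eq_0[OF shells_vanish_outside(1)]
    pd_shell_eq_0[OF shells_vanish_outside(2)]
  by (simp add: energy_def)

lemma mixed_A_smooth_alg: "mixed_A \<in> smooth_alg"
  by (simp add: mixed_A_def[abs_def])

lemma mixed_B_smooth_alg: "mixed_B \<in> smooth_alg"
  by (simp add: mixed_B_def[abs_def])

lemma mixed_A_eq_0: "x \<notin> shell_region \<Longrightarrow> mixed_A x = 0"
  using pd_shell_eq_0[OF shells_vanish_outside(1)] by (simp add: mixed_A_def)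

lemma mixed_B_eq_0: "x \<notin> shell_region \<Longrightarrow> mixed_B x = 0"
  using pd_shell_eq_0[OF shells_vanish_outside(2)] by (simp add: mixed_B_def)

lemma mixed_A_reflect: "mixed_A (reflect 1 x) = - mixed_A x"
  by (simp add: mixed_A_def pd_pd_reflect[OF shell_smooth_alg shell_reflect])

lemma mixed_B_reflect: "mixed_B (reflect 3 x) = - mixed_B x"
  by (simp add: mixed_B_def pd_pd_reflect[OF shell_smooth_alg shell_reflect])

lemma has_integral_A1_of_vanishing_outside:
  assumes "f \<in> smooth_alg" "\<And>x. x \<notin> shell_region \<Longrightarrow> f x = 0"
  shows "(f has_integral integral (cbox (- 2) 2) f) A1"
  by (rule has_integral_of_vanishing_outside[OF smooth_alg_continuous_on[OF assms(1)] A1_subset_cbox])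
     (use assms(2) shell_region_subset_A1 in blast)

definition weight :: "3 \<Rightarrow> real" where
  "weight k = integral (cbox (- 2) 2) (energy k)"

lemma weight_pos: "0 < weight k"
  unfolding weight_def
proof (rule integral_pos_of_continuous_nonneg[OF smooth_alg_continuous_on[OF energy_smooth_alg]
      _ energy_nonneg _ energy_pos])
  have "0 \<in> box (- 2) (2 :: real^3)"
    by (simp add: mem_box_cart)
  then show "box (- 2) (2 :: real^3) \<noteq> {}"
    by blast
  show "(if k = 3 then axis 1 (9/5) else axis 3 (3/2)) \<in> cbox (- 2) (2 :: real^3)"
    by (auto simp: mem_box_cart axis_def)
qed

lemma has_integral_pairing: "(pairing tau_field (sigma_field c) k has_integral c $ k * weight k) A1"
proof -
  have energy: "(energy k has_integral weight k) A1" for k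
    unfolding weight_def
    by (rule has_integral_A1_of_vanishing_outside[OF energy_smooth_alg energy_eq_0])
  have mixed_A: "(mixed_A has_integral 0) A1"
    using has_integral_A1_of_vanishing_outside[OF mixed_A_smooth_alg mixed_A_eq_0]
      integral_odd_reflect_eq_0[OF smooth_alg_continuous_on[OF mixed_A_smooth_alg] mixed_A_reflect]
    by simp
  have mixed_B: "(mixed_B has_integral 0) A1"
    using has_integral_A1_of_vanishing_outside[OF mixed_B_smooth_alg mixed_B_eq_0]
      integral_odd_reflect_eq_0[OF smooth_alg_continuous_on[OF mixed_B_smooth_alg] mixed_B_reflect]
    by simp
  have pairing: "pairing tau_field (sigma_field c) k =
    (if k = 1 then (\<lambda>x. c $ 1 * energy 1 x + c $ 2 * mixed_A x)
     else if k = 2 then (\<lambda>x. c $ 1 * mixed_A x + c $ 2 * energy 2 x + c $ 3 * mixed_B x)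
     else (\<lambda>x. c $ 3 * energy 3 x))"
    by (auto simp: pairing_eq)
  consider "k = 1" | "k = 2" | "k = 3"
    using exhaust_3 by blast
  then show ?thesis
  proof cases
    case 1
    have "((\<lambda>x. c $ 1 * energy 1 x + c $ 2 * mixed_A x) has_integral c $ 1 * weight 1 + c $ 2 * 0) A1"
      by (intro has_integral_add has_integral_mult_right energy mixed_A)
    with 1 show ?thesis unfolding pairing by simp
  next
    case 2
    have "((\<lambda>x. c $ 1 * mixed_A x + c $ 2 * energy 2 x + c $ 3 * mixed_B x)
        has_integral c $ 1 * 0 + c $ 2 * weight 2 + c $ 3 * 0) A1"
      by (intro has_integral_add has_integral_mult_right energy mixed_A mixed_B)
    with 2 show ?thesis unfolding pairing by simp
  next
    case 3
    have "((\<lambda>x. c $ 3 * energy 3 x) has_integral c $ 3 * weight 3) A1"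
      by (intro has_integral_mult_right energy)
    with 3 show ?thesis unfolding pairing by simp
  qed
qed

theorem theorem2p7:
  fixes lam :: "real^3"
  shows "\<exists>\<sigma> \<tau> :: real^3 \<Rightarrow> real^3^3.
    smooth_sym_tensor \<sigma> \<and> smooth_sym_tensor \<tau> \<and>
    compact (tsupport \<sigma>) \<and> tsupport \<sigma> \<subseteq> A1 \<and>
    compact (tsupport \<tau>) \<and> tsupport \<tau> \<subseteq> A1 \<and>
    (\<forall>x. \<sigma> (-x) = \<sigma> x) \<and> (\<forall>x. \<tau> (-x) = \<tau> x) \<and>
    (\<forall>x. Lin \<sigma> x = 0) \<and>
    (\<forall>j x. (\<Sum>i\<in>UNIV. pd i (\<lambda>y. \<tau> y $ i $ j) x) = 0) \<and>
    (\<forall>k. integral A1 (\<lambda>x. \<Sum>i\<in>UNIV. \<Sum>j\<in>UNIV. \<Sum>l\<in>UNIV.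
          ((1/2) * pd l (\<lambda>y. \<tau> y $ i $ j) x * Y k x $ l
           + \<tau> x $ i $ l * pd j (\<lambda>y. Y k y $ l) x) * \<sigma> x $ i $ j) = lam $ k)"
proof -
  define c :: "real^3" where "c = (\<chi> k. lam $ k / weight k)"
  have "integral A1 (pairing tau_field (sigma_field c) k) = lam $ k" for k
    using integral_unique[OF has_integral_pairing] weight_pos[of k] by (simp add: c_def)
  then show ?thesis
    unfolding pairing_def[abs_def]
    by (intro exI[of _ "sigma_field c"] exI[of _ tau_field] conjI allI)
       (simp_all add: smooth_sym_tensor_sigma_field smooth_sym_tensor_tau_field tsupport_sigma_field
         tsupport_tau_field sigma_field_neg tau_field_neg Lin_sigma_field div_tau_field)
qed

end
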